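(* Let $0\to A\to B\xrightarrow{g} C\to 0$ be a short exact sequence of abelian groups with $C$ torsion-free and $B/nB$ finite for every $n\in\mathbb Z_{>0}$, considered as a three-sorted structure as described below. If $X\subseteq B$ is definable, then there is $n\in\mathbb Z_{>0}$ such that $X$ is almost saturated with respect to the quotient map $B\to B/nA$.
   Context: The structure has three sorts $A$, $B$, $C$, the group language $(+,0,-)$ on $B$, the maps $A\to B$ and $g:B\to C$, arbitrary additional constants, relations and functions on $A$ and on $C$ (extending their group languages), and for each $n\in\mathbb Z_{>0}$ a predicate interpreted as $nB$. (Motivating example: $1\to k^\times\to RV\to\Gamma\to 0$ for a valued field, with field structure on $k$ and ordered group structure on $\Gamma$.) A definable set $Z\subseteq X$ is almost saturated with respect to a map $f:X\to Y$ if $f(Z)\cap f(X\setminus Z)$ is finite. *)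

theory Defs
  imports Main
begin

fun nmul :: "nat \<Rightarrow> 'a::ab_group_add \<Rightarrow> 'a" where
  "nmul 0 x = 0"
| "nmul (Suc n) x = x + nmul n x"

text \<open>Sort A: group language plus arbitrary function symbols (constants are
0-ary functions) of type 'fa and relation symbols of type 'ra.\<close>

datatype 'fa tmA =
    VarA nat
  | ZeroA
  | AddA "'fa tmA" "'fa tmA"
  | NegA "'fa tmA"
  | FunA 'fa "'fa tmA list"

datatype 'fa tmB =
    VarB nat
  | ZeroB
  | AddB "'fa tmB" "'fa tmB"
  | NegB "'fa tmB"
  | Iota "'fa tmA"

datatype ('fa, 'fc) tmC =
    VarC nat
  | ZeroC
  | AddC "('fa, 'fc) tmC" "('fa, 'fc) tmC"
  | NegC "('fa, 'fc) tmC"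
  | FunC 'fc "('fa, 'fc) tmC list"
  | Gmap "'fa tmB"

datatype ('ra, 'fa, 'rc, 'fc) fml =
    EqA "'fa tmA" "'fa tmA"
  | EqB "'fa tmB" "'fa tmB"
  | EqC "('fa, 'fc) tmC" "('fa, 'fc) tmC"
  | RelA 'ra "'fa tmA list"
  | RelC 'rc "('fa, 'fc) tmC list"
  | DivB nat "'fa tmB"      \<comment> \<open>the predicate for nB, used for n > 0\<close>
  | Neg "('ra, 'fa, 'rc, 'fc) fml"
  | Conj "('ra, 'fa, 'rc, 'fc) fml" "('ra, 'fa, 'rc, 'fc) fml"
  | ExA nat "('ra, 'fa, 'rc, 'fc) fml"
  | ExB nat "('ra, 'fa, 'rc, 'fc) fml"
  | ExC nat "('ra, 'fa, 'rc, 'fc) fml"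

primrec evalA :: "('fa \<Rightarrow> 'a list \<Rightarrow> 'a) \<Rightarrow> (nat \<Rightarrow> 'a::ab_group_add) \<Rightarrow> 'fa tmA \<Rightarrow> 'a" where
  "evalA FA e (VarA i) = e i"
| "evalA FA e ZeroA = 0"
| "evalA FA e (AddA s t) = evalA FA e s + evalA FA e t"
| "evalA FA e (NegA s) = - evalA FA e s"
| "evalA FA e (FunA f ts) = FA f (map (evalA FA e) ts)"

primrec evalB :: "('a \<Rightarrow> 'b) \<Rightarrow> ('fa \<Rightarrow> 'a list \<Rightarrow> 'a) \<Rightarrow> (nat \<Rightarrow> 'a::ab_group_add)
    \<Rightarrow> (nat \<Rightarrow> 'b::ab_group_add) \<Rightarrow> 'fa tmB \<Rightarrow> 'b" where
  "evalB \<iota> FA eA eB (VarB i) = eB i"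
| "evalB \<iota> FA eA eB ZeroB = 0"
| "evalB \<iota> FA eA eB (AddB s t) = evalB \<iota> FA eA eB s + evalB \<iota> FA eA eB t"
| "evalB \<iota> FA eA eB (NegB s) = - evalB \<iota> FA eA eB s"
| "evalB \<iota> FA eA eB (Iota s) = \<iota> (evalA FA eA s)"

primrec evalC :: "('a \<Rightarrow> 'b) \<Rightarrow> ('b \<Rightarrow> 'c) \<Rightarrow> ('fa \<Rightarrow> 'a list \<Rightarrow> 'a) \<Rightarrow> ('fc \<Rightarrow> 'c list \<Rightarrow> 'c)
    \<Rightarrow> (nat \<Rightarrow> 'a::ab_group_add) \<Rightarrow> (nat \<Rightarrow> 'b::ab_group_add) \<Rightarrow> (nat \<Rightarrow> 'c::ab_group_add)
    \<Rightarrow> ('fa, 'fc) tmC \<Rightarrow> 'c" where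
  "evalC \<iota> g FA FC eA eB eC (VarC i) = eC i"
| "evalC \<iota> g FA FC eA eB eC ZeroC = 0"
| "evalC \<iota> g FA FC eA eB eC (AddC s t) = evalC \<iota> g FA FC eA eB eC s + evalC \<iota> g FA FC eA eB eC t"
| "evalC \<iota> g FA FC eA eB eC (NegC s) = - evalC \<iota> g FA FC eA eB eC s"
| "evalC \<iota> g FA FC eA eB eC (FunC f ts) = FC f (map (evalC \<iota> g FA FC eA eB eC) ts)"
| "evalC \<iota> g FA FC eA eB eC (Gmap s) = g (evalB \<iota> FA eA eB s)"

primrec sat :: "('a \<Rightarrow> 'b) \<Rightarrow> ('b \<Rightarrow> 'c) \<Rightarrow> ('ra \<Rightarrow> 'a list \<Rightarrow> bool) \<Rightarrow> ('fa \<Rightarrow> 'a list \<Rightarrow> 'a)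
    \<Rightarrow> ('rc \<Rightarrow> 'c list \<Rightarrow> bool) \<Rightarrow> ('fc \<Rightarrow> 'c list \<Rightarrow> 'c)
    \<Rightarrow> (nat \<Rightarrow> 'a::ab_group_add) \<Rightarrow> (nat \<Rightarrow> 'b::ab_group_add) \<Rightarrow> (nat \<Rightarrow> 'c::ab_group_add)
    \<Rightarrow> ('ra, 'fa, 'rc, 'fc) fml \<Rightarrow> bool" where
  "sat \<iota> g RA FA RC FC eA eB eC (EqA s t) = (evalA FA eA s = evalA FA eA t)"
| "sat \<iota> g RA FA RC FC eA eB eC (EqB s t) = (evalB \<iota> FA eA eB s = evalB \<iota> FA eA eB t)"
| "sat \<iota> g RA FA RC FC eA eB eC (EqC s t) =
     (evalC \<iota> g FA FC eA eB eC s = evalC \<iota> g FA FC eA eB eC t)"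
| "sat \<iota> g RA FA RC FC eA eB eC (RelA r ts) = RA r (map (evalA FA eA) ts)"
| "sat \<iota> g RA FA RC FC eA eB eC (RelC r ts) = RC r (map (evalC \<iota> g FA FC eA eB eC) ts)"
| "sat \<iota> g RA FA RC FC eA eB eC (DivB n s) = (\<exists>y. evalB \<iota> FA eA eB s = nmul n y)"
| "sat \<iota> g RA FA RC FC eA eB eC (Neg \<phi>) = (\<not> sat \<iota> g RA FA RC FC eA eB eC \<phi>)"
| "sat \<iota> g RA FA RC FC eA eB eC (Conj \<phi> \<psi>) =
     (sat \<iota> g RA FA RC FC eA eB eC \<phi> \<and> sat \<iota> g RA FA RC FC eA eB eC \<psi>)"
| "sat \<iota> g RA FA RC FC eA eB eC (ExA i \<phi>) = (\<exists>x. sat \<iota> g RA FA RC FC (eA(i := x)) eB eC \<phi>)"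
| "sat \<iota> g RA FA RC FC eA eB eC (ExB i \<phi>) = (\<exists>x. sat \<iota> g RA FA RC FC eA (eB(i := x)) eC \<phi>)"
| "sat \<iota> g RA FA RC FC eA eB eC (ExC i \<phi>) = (\<exists>x. sat \<iota> g RA FA RC FC eA eB (eC(i := x)) \<phi>)"

text \<open>A subset X of the sort B is definable (with parameters) if there are a formula
\<phi> and an assignment of parameters such that X = {b. \<phi>(b)} with b in B-variable 0.
The formula's symbol types are those of the given structure.\<close>

definition definable_B ::
  "('a::ab_group_add \<Rightarrow> 'b::ab_group_add) \<Rightarrow> ('b \<Rightarrow> 'c::ab_group_add) \<Rightarrow> ('ra \<Rightarrow> 'a list \<Rightarrow> bool)
   \<Rightarrow> ('fa \<Rightarrow> 'a list \<Rightarrow> 'a) \<Rightarrow> ('rc \<Rightarrow> 'c list \<Rightarrow> bool) \<Rightarrow> ('fc \<Rightarrow> 'c list \<Rightarrow> 'c)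
   \<Rightarrow> 'b set \<Rightarrow> bool" where
  "definable_B \<iota> g RA FA RC FC X \<longleftrightarrow>
     (\<exists>(\<phi> :: ('ra, 'fa, 'rc, 'fc) fml) eA eB eC.
        X = {b. sat \<iota> g RA FA RC FC eA (eB(0 := b)) eC \<phi>})"

definition almost_saturated :: "('x \<Rightarrow> 'y) \<Rightarrow> 'x set \<Rightarrow> 'x set \<Rightarrow> bool" where
  "almost_saturated f X Z \<longleftrightarrow> finite (f ` Z \<inter> f ` (X - Z))"

definition quot_nA :: "('a::ab_group_add \<Rightarrow> 'b::ab_group_add) \<Rightarrow> nat \<Rightarrow> 'b \<Rightarrow> 'b set" where
  "quot_nA \<iota> n b = {b + nmul n (\<iota> a) | a. True}"

definition quot_nB :: "nat \<Rightarrow> 'b::ab_group_add \<Rightarrow> 'b set" where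
  "quot_nB n b = {b + nmul n y | y. True}"

end

theory Submission
  imports Defs "HOL.Modules"
begin

text \<open>Every formula is invariant under an equivalence of \<open>B\<close>-assignments given by finitely many
  integer linear forms \<open>F\<close> in the \<open>B\<close>-variables and a modulus \<open>N\<close>: the values of each \<open>F\<close> must
  have the same image in \<open>C\<close>, be congruent modulo \<open>N B\<close>, and be equal as soon as they lie in
  \<open>A\<close>. The only substantial case of the induction on formulas is a \<open>B\<close>-quantifier: a witness
  is transported by a single shift \<open>w \<in> N B \<inter> A\<close> solving finitely many linear conditions at
  once, found through a Bezout combination of their coefficients (here torsion-freeness of \<open>C\<close>
  is used). Applied to \<open>X\<close>, invariance shows that \<open>b\<close> and \<open>b + N a\<close> lie on the same side of
  \<open>X\<close> unless \<open>g b\<close> is one of finitely many exceptional values, and every fibre of \<open>g\<close> meets only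
  finitely many cosets of \<open>N A\<close>, because \<open>B/N B\<close> is finite and \<open>C\<close> is torsion-free.\<close>

section \<open>Integer multiples in abelian groups\<close>

lemma nmul_zero_right [simp]: "nmul n (0::'a::ab_group_add) = 0"
  by (induct n) auto

lemma nmul_add_right: "nmul n (x + y) = nmul n x + nmul n (y::'a::ab_group_add)"
  by (induct n) (auto simp: algebra_simps)

lemma nmul_minus_right: "nmul n (- x) = - nmul n (x::'a::ab_group_add)"
  by (induct n) (auto simp: algebra_simps)

lemma nmul_diff_right: "nmul n (x - y) = nmul n x - nmul n (y::'a::ab_group_add)"
  using nmul_add_right[of n x "- y"] by (simp add: nmul_minus_right)

lemma nmul_add_left: "nmul (m + n) x = nmul m x + nmul n (x::'a::ab_group_add)"
  by (induct m) (auto simp: algebra_simps)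

lemma nmul_mult: "nmul (m * n) x = nmul m (nmul n (x::'a::ab_group_add))"
  by (induct m) (auto simp: nmul_add_left)

definition zmul :: "int \<Rightarrow> 'a::ab_group_add \<Rightarrow> 'a" where
  "zmul k x = nmul (nat k) x - nmul (nat (- k)) x"

lemma zmul_of_nat [simp]: "zmul (int n) x = nmul n x"
  by (simp add: zmul_def)

lemma zmul_nonneg: "0 \<le> k \<Longrightarrow> zmul k x = nmul (nat k) x"
  by (simp add: zmul_def)

lemma zmul_zero_left [simp]: "zmul 0 x = 0"
  by (simp add: zmul_def)

lemma zmul_one: "zmul 1 x = x"
  by (simp add: zmul_def)

lemma zmul_zero_right [simp]: "zmul k 0 = 0"
  by (simp add: zmul_def)

lemma zmul_minus_left: "zmul (- k) x = - zmul k x"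
  by (simp add: zmul_def)

lemma zmul_add_right: "zmul k (x + y) = zmul k x + zmul k y"
  by (simp add: zmul_def nmul_add_right algebra_simps)

lemma zmul_minus_right: "zmul k (- x) = - zmul k x"
  by (simp add: zmul_def nmul_minus_right algebra_simps)

lemma zmul_diff_right: "zmul k (x - y) = zmul k x - zmul k y"
  using zmul_add_right[of k x "- y"] by (simp add: zmul_minus_right)

lemma zmul_add_left: "zmul (a + b) x = zmul a x + zmul b x"
proof -
  have e: "nat a + nat b + nat (- (a + b)) = nat (a + b) + nat (- a) + nat (- b)"
    by linarith
  have "nmul (nat a + nat b + nat (- (a + b))) x = nmul (nat (a + b) + nat (- a) + nat (- b)) x"
    by (simp only: e)
  then have "nmul (nat (a + b)) x = nmul (nat a) x + nmul (nat b) x + nmul (nat (- (a + b))) x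
      - nmul (nat (- a)) x - nmul (nat (- b)) x"
    by (simp add: nmul_add_left algebra_simps)
  then show ?thesis
    by (simp add: zmul_def algebra_simps)
qed

lemma zmul_mult: "zmul (a * b) x = zmul a (zmul b x)"
proof -
  have int_factor: "zmul (int n * b) x = nmul n (zmul b x)" for n
    by (induct n) (auto simp: zmul_add_left algebra_simps)
  show ?thesis
  proof (cases "0 \<le> a")
    case True
    then obtain n where "a = int n"
      using nonneg_int_cases by blast
    then show ?thesis
      by (simp add: int_factor)
  next
    case False
    then obtain n where "a = - int n"
      by (metis neg_int_cases linorder_not_le)
    then show ?thesis
      by (simp add: zmul_minus_left int_factor)
  qed
qed

lemma zmul_nmul_commute: "zmul k (nmul n x) = nmul n (zmul k x)"
  by (metis zmul_of_nat zmul_mult mult.commute)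

lemma zmul_sum_left: "zmul (sum f S) x = (\<Sum>l\<in>S. zmul (f l) x)"
  by (induct S rule: infinite_finite_induct) (auto simp: zmul_add_left)

context additive
begin

lemma nmul: "f (nmul n x) = nmul n (f x)"
  by (induct n) (simp_all add: add zero)

lemma zmul: "f (zmul k x) = zmul k (f x)"
  by (simp add: zmul_def diff nmul)

end

lemma Gcd_int_lincomb:
  fixes k :: "'x \<Rightarrow> int"
  assumes "finite J"
  shows "\<exists>s. (\<Sum>F\<in>J. s F * k F) = Gcd (k ` J)"
  using assms
proof (induct J rule: finite_induct)
  case empty
  show ?case by simp
next
  case (insert a J)
  then obtain s where s: "(\<Sum>F\<in>J. s F * k F) = Gcd (k ` J)"
    by blast
  obtain u v where uv: "u * k a + v * Gcd (k ` J) = gcd (k a) (Gcd (k ` J))"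
    using bezout_int by blast
  let ?s = "\<lambda>F. if F = a then u else v * s F"
  have "(\<Sum>F\<in>insert a J. ?s F * k F) = u * k a + v * (\<Sum>F\<in>J. s F * k F)"
    using insert by (auto simp: sum_distrib_left mult.assoc intro!: sum.cong)
  also have "\<dots> = Gcd (k ` insert a J)"
    using uv s by simp
  finally show ?case
    by (intro exI[of _ ?s])
qed

lemma Gcd_dvd_prod_nat_abs:
  fixes k :: "'x \<Rightarrow> int"
  assumes "finite S" "J \<subseteq> S" "J \<noteq> {}"
  shows "Gcd (k ` J) dvd int (\<Prod>x\<in>S. nat \<bar>k x\<bar>)"
proof -
  obtain x where "x \<in> J"
    using assms(3) by blast
  have "\<bar>k x\<bar> dvd (\<Prod>x\<in>S. \<bar>k x\<bar>)"
    using assms(1,2) \<open>x \<in> J\<close> by (intro dvd_prodI) auto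
  then have "k x dvd int (\<Prod>x\<in>S. nat \<bar>k x\<bar>)"
    unfolding of_nat_prod by simp
  then show ?thesis
    using \<open>x \<in> J\<close> by (metis Gcd_dvd_int dvd_trans image_eqI)
qed

section \<open>Integer linear forms in the variables of sort \<open>B\<close>\<close>

inductive_set lin_forms :: "((nat \<Rightarrow> 'b::ab_group_add) \<Rightarrow> 'b) set" where
  var: "(\<lambda>e. e i) \<in> lin_forms"
| zero: "(\<lambda>e. 0) \<in> lin_forms"
| add: "F \<in> lin_forms \<Longrightarrow> G \<in> lin_forms \<Longrightarrow> (\<lambda>e. F e + G e) \<in> lin_forms"
| minus: "F \<in> lin_forms \<Longrightarrow> (\<lambda>e. - F e) \<in> lin_forms"

lemma lin_forms_diff: "F \<in> lin_forms \<Longrightarrow> G \<in> lin_forms \<Longrightarrow> (\<lambda>e. F e - G e) \<in> lin_forms"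
  using lin_forms.add[OF _ lin_forms.minus[of G]] by simp

lemma lin_forms_nmul: "F \<in> lin_forms \<Longrightarrow> (\<lambda>e. nmul n (F e)) \<in> lin_forms"
  by (induct n) (auto intro: lin_forms.intros)

lemma lin_forms_zmul: "F \<in> lin_forms \<Longrightarrow> (\<lambda>e. zmul k (F e)) \<in> lin_forms"
  unfolding zmul_def by (intro lin_forms_diff lin_forms_nmul)

lemma lin_forms_sum:
  "finite S \<Longrightarrow> (\<And>l. l \<in> S \<Longrightarrow> f l \<in> lin_forms) \<Longrightarrow> (\<lambda>e. \<Sum>l\<in>S. f l e) \<in> lin_forms"
  by (induct S rule: finite_induct) (auto intro: lin_forms.intros)

definition drop_var :: "nat \<Rightarrow> ((nat \<Rightarrow> 'b) \<Rightarrow> 'b::ab_group_add) \<Rightarrow> (nat \<Rightarrow> 'b) \<Rightarrow> 'b" where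
  "drop_var i F = (\<lambda>e. F (e(i := 0)))"

lemma lin_forms_drop_var: "F \<in> lin_forms \<Longrightarrow> drop_var i F \<in> lin_forms"
  unfolding drop_var_def
proof (induct rule: lin_forms.induct)
  case (var j)
  show ?case
    by (cases "j = i") (auto intro: lin_forms.intros)
qed (auto intro: lin_forms.intros)

lemma lin_forms_update_ex:
  "F \<in> lin_forms \<Longrightarrow> \<exists>k. \<forall>e x. F (e(i := x)) = zmul k x + drop_var i F e"
  unfolding drop_var_def
proof (induct rule: lin_forms.induct)
  case (var j)
  show ?case
  proof (cases "j = i")
    case True
    then show ?thesis
      by (intro exI[of _ 1]) (simp add: zmul_one)
  next
    case False
    then show ?thesis
      by (intro exI[of _ 0]) simp
  qed
next
  case zero
  show ?case
    by (intro exI[of _ 0]) simp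
next
  case (add F G)
  then obtain k l where "\<forall>e x. F (e(i := x)) = zmul k x + F (e(i := 0))"
    "\<forall>e x. G (e(i := x)) = zmul l x + G (e(i := 0))"
    by blast
  then have "\<forall>e x. F (e(i := x)) + G (e(i := x)) = zmul (k + l) x + (F (e(i := 0)) + G (e(i := 0)))"
    unfolding zmul_add_left by (metis add.assoc add.left_commute)
  then show ?case
    by blast
next
  case (minus F)
  then obtain k where "\<forall>e x. F (e(i := x)) = zmul k x + F (e(i := 0))"
    by blast
  then have "\<forall>e x. - F (e(i := x)) = zmul (- k) x + - F (e(i := 0))"
    unfolding zmul_minus_left by (metis minus_add_distrib)
  then show ?case
    by blast
qed

definition coeff :: "nat \<Rightarrow> ((nat \<Rightarrow> 'b) \<Rightarrow> 'b::ab_group_add) \<Rightarrow> int" where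
  "coeff i F = (SOME k. \<forall>e x. F (e(i := x)) = zmul k x + drop_var i F e)"

lemma lin_forms_update: "F \<in> lin_forms \<Longrightarrow> F (e(i := x)) = zmul (coeff i F) x + drop_var i F e"
  using someI_ex[OF lin_forms_update_ex[of F i]] unfolding coeff_def by blast

text \<open>If \<open>s\<close> are Bezout coefficients for the \<open>i\<close>-th coefficients of the forms in \<open>J\<close>, with gcd
  \<open>G\<close>, then \<open>bezout_form i s J\<close> is what determines a common shift of the variable \<open>i\<close>, and
  \<open>defect_form i s J F\<close> is the discrepancy between \<open>F\<close> and \<open>coeff i F div G\<close> times it.\<close>

definition bezout_form ::
    "nat \<Rightarrow> (((nat \<Rightarrow> 'b) \<Rightarrow> 'b) \<Rightarrow> int) \<Rightarrow> ((nat \<Rightarrow> 'b) \<Rightarrow> 'b::ab_group_add) set \<Rightarrow> (nat \<Rightarrow> 'b) \<Rightarrow> 'b" where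
  "bezout_form i s J = (\<lambda>e. \<Sum>F\<in>J. zmul (s F) (drop_var i F e))"

definition defect_form ::
    "nat \<Rightarrow> (((nat \<Rightarrow> 'b) \<Rightarrow> 'b) \<Rightarrow> int) \<Rightarrow> ((nat \<Rightarrow> 'b) \<Rightarrow> 'b::ab_group_add) set
      \<Rightarrow> ((nat \<Rightarrow> 'b) \<Rightarrow> 'b) \<Rightarrow> (nat \<Rightarrow> 'b) \<Rightarrow> 'b" where
  "defect_form i s J F =
    (\<lambda>e. zmul (coeff i F div Gcd (coeff i ` J)) (bezout_form i s J e) - drop_var i F e)"

lemma lin_forms_bezout_form:
  "finite J \<Longrightarrow> J \<subseteq> lin_forms \<Longrightarrow> bezout_form i s J \<in> lin_forms"
  unfolding bezout_form_def by (intro lin_forms_sum) (auto intro!: lin_forms_zmul lin_forms_drop_var)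

lemma lin_forms_defect_form:
  "finite J \<Longrightarrow> J \<subseteq> lin_forms \<Longrightarrow> F \<in> lin_forms \<Longrightarrow> defect_form i s J F \<in> lin_forms"
  unfolding defect_form_def
  by (intro lin_forms_diff lin_forms_zmul lin_forms_bezout_form lin_forms_drop_var)

section \<open>Formulas are invariant under equivalence for linear forms\<close>

locale exact_seq =
  iota: additive \<iota> + g: additive g
  for \<iota> :: "'a::ab_group_add \<Rightarrow> 'b::ab_group_add" and g :: "'b \<Rightarrow> 'c::ab_group_add" +
  assumes exact: "{b. g b = 0} = range \<iota>"
begin

lemma g_iota [simp]: "g (\<iota> a) = 0"
  using exact by auto

lemma in_range_iota: "g b = 0 \<Longrightarrow> \<exists>a. b = \<iota> a"
  using exact by auto

lemma quot_nA_self: "b \<in> quot_nA \<iota> N b"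
  unfolding quot_nA_def by (auto intro!: exI[of _ 0] simp: iota.zero)

lemma quot_nA_eqD:
  assumes "quot_nA \<iota> N b1 = quot_nA \<iota> N b2"
  shows "\<exists>a. b2 = b1 + nmul N (\<iota> a)"
proof -
  have "b2 \<in> quot_nA \<iota> N b1"
    using assms quot_nA_self by metis
  then show ?thesis
    unfolding quot_nA_def by blast
qed

lemma quot_nA_add: "quot_nA \<iota> N (b + nmul N (\<iota> a)) = quot_nA \<iota> N b"
proof -
  have "(\<exists>a'. x = b + nmul N (\<iota> a) + nmul N (\<iota> a')) \<longleftrightarrow> (\<exists>a'. x = b + nmul N (\<iota> a'))" for x
    by (metis (no_types, opaque_lifting) add.assoc iota.add nmul_add_right add_diff_cancel_left' diff_add_cancel)
  then show ?thesis
    unfolding quot_nA_def by auto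
qed

definition forms_equiv :: "((nat \<Rightarrow> 'b) \<Rightarrow> 'b) set \<Rightarrow> nat \<Rightarrow> (nat \<Rightarrow> 'b) \<Rightarrow> (nat \<Rightarrow> 'b) \<Rightarrow> bool" where
  "forms_equiv FS N e1 e2 \<longleftrightarrow> (\<forall>F\<in>FS. g (F e1) = g (F e2) \<and> (\<exists>y. F e1 - F e2 = nmul N y)
      \<and> (g (F e1) = 0 \<longrightarrow> F e1 = F e2))"

lemma forms_equivI:
  assumes "\<And>F. F \<in> FS \<Longrightarrow> g (F e1 - F e2) = 0"
    and "\<And>F. F \<in> FS \<Longrightarrow> \<exists>y. F e1 - F e2 = nmul N y"
    and "\<And>F. F \<in> FS \<Longrightarrow> g (F e1) = 0 \<Longrightarrow> F e1 = F e2"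
  shows "forms_equiv FS N e1 e2"
  using assms unfolding forms_equiv_def by (simp add: g.diff)

lemma forms_equivD:
  assumes "forms_equiv FS N e1 e2" "F \<in> FS"
  shows "g (F e1) = g (F e2)" "\<exists>y. F e1 - F e2 = nmul N y" "g (F e1) = 0 \<Longrightarrow> F e1 = F e2"
  using assms unfolding forms_equiv_def by blast+

lemma forms_equiv_refl: "forms_equiv FS N e e"
  unfolding forms_equiv_def by (auto intro: exI[of _ 0])

lemma forms_equiv_sym: "forms_equiv FS N e1 e2 \<Longrightarrow> forms_equiv FS N e2 e1"
  unfolding forms_equiv_def by (metis minus_diff_eq nmul_minus_right)

lemma forms_equiv_mono:
  assumes "forms_equiv FS N e1 e2" "FS' \<subseteq> FS" "M dvd N"
  shows "forms_equiv FS' M e1 e2"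
proof -
  obtain q where "N = M * q"
    using assms(3) by blast
  then have "\<exists>y. x = nmul M y" if "\<exists>y. x = nmul N y" for x :: 'b
    using that by (metis nmul_mult)
  then show ?thesis
    using assms(1,2) unfolding forms_equiv_def by blast
qed

definition form_invariant :: "((nat \<Rightarrow> 'a) \<Rightarrow> (nat \<Rightarrow> 'b) \<Rightarrow> (nat \<Rightarrow> 'c) \<Rightarrow> bool) \<Rightarrow> bool" where
  "form_invariant P \<longleftrightarrow> (\<exists>FS N. finite FS \<and> FS \<subseteq> lin_forms \<and> 0 < N \<and>
      (\<forall>eA e1 e2 eC. forms_equiv FS N e1 e2 \<longrightarrow> P eA e1 eC \<longrightarrow> P eA e2 eC))"

lemma form_invariantI:
  "finite FS \<Longrightarrow> FS \<subseteq> lin_forms \<Longrightarrow> 0 < N \<Longrightarrow>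
    (\<And>eA e1 e2 eC. forms_equiv FS N e1 e2 \<Longrightarrow> P eA e1 eC \<Longrightarrow> P eA e2 eC) \<Longrightarrow> form_invariant P"
  unfolding form_invariant_def by blast

lemma form_invariantE:
  assumes "form_invariant P"
  obtains FS N where "finite FS" "FS \<subseteq> lin_forms" "0 < N"
    "\<And>eA e1 e2 eC. forms_equiv FS N e1 e2 \<Longrightarrow> P eA e1 eC \<Longrightarrow> P eA e2 eC"
  using assms unfolding form_invariant_def by blast

lemma form_invariant_const: "(\<And>eA e1 e2 eC. P eA e1 eC = P eA e2 eC) \<Longrightarrow> form_invariant P"
  by (rule form_invariantI[of "{}" 1]) auto

lemma form_invariant_transfer:
  assumes "form_invariant P"
    and "\<And>FS N eA e1 e2 eC.
      (\<And>eA e1 e2 eC. forms_equiv FS N e1 e2 \<Longrightarrow> P eA e1 eC \<Longrightarrow> P eA e2 eC) \<Longrightarrow>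
        forms_equiv FS N e1 e2 \<Longrightarrow> Q eA e1 eC \<Longrightarrow> Q eA e2 eC"
  shows "form_invariant Q"
  using assms unfolding form_invariant_def by metis

lemma form_invariant_not: "form_invariant P \<Longrightarrow> form_invariant (\<lambda>eA eB eC. \<not> P eA eB eC)"
  by (erule form_invariant_transfer) (blast dest: forms_equiv_sym)

lemma form_invariant_conj:
  assumes "form_invariant P" "form_invariant Q"
  shows "form_invariant (\<lambda>eA eB eC. P eA eB eC \<and> Q eA eB eC)"
proof -
  obtain FS N where FS: "finite FS" "FS \<subseteq> lin_forms" "0 < N"
    and P: "\<And>eA e1 e2 eC. forms_equiv FS N e1 e2 \<Longrightarrow> P eA e1 eC \<Longrightarrow> P eA e2 eC"
    using form_invariantE[OF assms(1)] by blast
  obtain FS' N' where FS': "finite FS'" "FS' \<subseteq> lin_forms" "0 < N'"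
    and Q: "\<And>eA e1 e2 eC. forms_equiv FS' N' e1 e2 \<Longrightarrow> Q eA e1 eC \<Longrightarrow> Q eA e2 eC"
    using form_invariantE[OF assms(2)] by blast
  have "forms_equiv FS N e1 e2" "forms_equiv FS' N' e1 e2"
    if "forms_equiv (FS \<union> FS') (N * N') e1 e2" for e1 e2
    using that by (auto elim: forms_equiv_mono)
  with FS FS' P Q show ?thesis
    by (intro form_invariantI[of "FS \<union> FS'" "N * N'"]) (auto, blast+)
qed

lemma form_invariant_ex_A:
  "form_invariant P \<Longrightarrow> form_invariant (\<lambda>eA eB eC. \<exists>x. P (eA(i := x)) eB eC)"
  by (erule form_invariant_transfer) blast

lemma form_invariant_ex_C:
  "form_invariant P \<Longrightarrow> form_invariant (\<lambda>eA eB eC. \<exists>x. P eA eB (eC(i := x)))"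
  by (erule form_invariant_transfer) blast

lemma evalB_decomp: "\<exists>F H. F \<in> lin_forms \<and> (\<forall>eA eB. evalB \<iota> FA eA eB t = F eB + \<iota> (H eA))"
proof (induct t)
  case (VarB i)
  show ?case
    by (intro exI[of _ "\<lambda>e. e i"] exI[of _ "\<lambda>_. 0"]) (auto simp: iota.zero intro: lin_forms.intros)
next
  case ZeroB
  show ?case
    by (intro exI[of _ "\<lambda>e. 0"] exI[of _ "\<lambda>_. 0"]) (auto simp: iota.zero intro: lin_forms.intros)
next
  case (AddB s t)
  then obtain F H F' H' where "F \<in> lin_forms" "\<forall>eA eB. evalB \<iota> FA eA eB s = F eB + \<iota> (H eA)"
    "F' \<in> lin_forms" "\<forall>eA eB. evalB \<iota> FA eA eB t = F' eB + \<iota> (H' eA)"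
    by blast
  then show ?case
    by (intro exI[of _ "\<lambda>e. F e + F' e"] exI[of _ "\<lambda>e. H e + H' e"])
      (auto simp: iota.add algebra_simps intro: lin_forms.intros)
next
  case (NegB s)
  then obtain F H where "F \<in> lin_forms" "\<forall>eA eB. evalB \<iota> FA eA eB s = F eB + \<iota> (H eA)"
    by blast
  then show ?case
    by (intro exI[of _ "\<lambda>e. - F e"] exI[of _ "\<lambda>e. - H e"])
      (auto simp: iota.minus algebra_simps intro: lin_forms.intros)
next
  case (Iota s)
  show ?case
    by (intro exI[of _ "\<lambda>e. 0"] exI[of _ "\<lambda>eA. evalA FA eA s"]) (auto intro: lin_forms.intros)
qed

lemma form_invariant_eq_B: "form_invariant (\<lambda>eA eB eC. evalB \<iota> FA eA eB s = evalB \<iota> FA eA eB t)"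
proof -
  obtain F H where F: "F \<in> lin_forms" "\<And>eA eB. evalB \<iota> FA eA eB s = F eB + \<iota> (H eA)"
    using evalB_decomp by blast
  obtain F' H' where F': "F' \<in> lin_forms" "\<And>eA eB. evalB \<iota> FA eA eB t = F' eB + \<iota> (H' eA)"
    using evalB_decomp by blast
  define D where "D = (\<lambda>e. F e - F' e)"
  have eq_iff: "evalB \<iota> FA eA e s = evalB \<iota> FA eA e t \<longleftrightarrow> D e = \<iota> (H' eA - H eA)" for eA e
    unfolding F F' D_def by (auto simp: iota.diff algebra_simps)
  show ?thesis
  proof (rule form_invariantI[of "{D}" 1])
    fix eA e1 e2 eC
    assume "forms_equiv {D} 1 e1 e2" "evalB \<iota> FA eA e1 s = evalB \<iota> FA eA e1 t"
    then show "evalB \<iota> FA eA e2 s = evalB \<iota> FA eA e2 t"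
      using forms_equivD(3)[of "{D}" 1 e1 e2 D] by (simp add: eq_iff)
  qed (auto simp: D_def intro: F' F lin_forms_diff)
qed

lemma form_invariant_div_B: "form_invariant (\<lambda>eA eB eC. \<exists>y. evalB \<iota> FA eA eB t = nmul n y)"
proof -
  obtain F H where F: "F \<in> lin_forms" "\<And>eA eB. evalB \<iota> FA eA eB t = F eB + \<iota> (H eA)"
    using evalB_decomp by blast
  show ?thesis
  proof (cases "n = 0")
    case True
    show ?thesis
    proof (rule form_invariantI[of "{F}" 1])
      fix eA e1 e2 eC
      assume "forms_equiv {F} 1 e1 e2" "\<exists>y. evalB \<iota> FA eA e1 t = nmul n y"
      moreover from this(2) have F_e1: "F e1 = - \<iota> (H eA)"
        using True unfolding F by (simp add: eq_neg_iff_add_eq_0)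
      ultimately have "F e2 = - \<iota> (H eA)"
        using forms_equivD(3)[of "{F}" 1 e1 e2 F] by (simp add: g.minus)
      then show "\<exists>y. evalB \<iota> FA eA e2 t = nmul n y"
        using True unfolding F by simp
    qed (use F in auto)
  next
    case False
    show ?thesis
    proof (rule form_invariantI[of "{F}" n])
      fix eA e1 e2 eC
      assume equiv: "forms_equiv {F} n e1 e2" and "\<exists>y. evalB \<iota> FA eA e1 t = nmul n y"
      then obtain y where "F e1 + \<iota> (H eA) = nmul n y"
        unfolding F by blast
      moreover obtain z where "F e1 - F e2 = nmul n z"
        using forms_equivD(2)[OF equiv] by blast
      ultimately have "F e2 + \<iota> (H eA) = nmul n (y - z)"
        by (simp add: nmul_diff_right algebra_simps)
      then show "\<exists>y. evalB \<iota> FA eA e2 t = nmul n y"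
        unfolding F by blast
    qed (use F False in auto)
  qed
qed

lemma g_drop_var_if_vanish:
  assumes "F \<in> lin_forms" "g (F (e(i := x))) = 0"
  shows "g (drop_var i F e) = - zmul (coeff i F) (g x)"
proof -
  have "0 = zmul (coeff i F) (g x) + g (drop_var i F e)"
    using assms by (simp add: lin_forms_update g.add g.zmul)
  then show ?thesis
    by (simp add: eq_neg_iff_add_eq_0 add.commute)
qed

lemma g_bezout_form:
  assumes "J \<subseteq> lin_forms" "\<forall>F\<in>J. g (F (e(i := x))) = 0"
  shows "g (bezout_form i s J e) = - zmul (\<Sum>F\<in>J. s F * coeff i F) (g x)"
proof -
  have "g (bezout_form i s J e) = (\<Sum>F\<in>J. - zmul (s F * coeff i F) (g x))"
    unfolding bezout_form_def g.sum using assms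
    by (intro sum.cong) (auto simp: g.zmul g_drop_var_if_vanish[where x = x] zmul_minus_right zmul_mult)
  then show ?thesis
    by (simp add: sum_negf flip: zmul_sum_left)
qed

text \<open>Terms of the sort \<open>C\<close> (and hence atomic formulas of that sort) see the \<open>B\<close>-variables
  only through the images in \<open>C\<close> of finitely many forms.\<close>

definition determined_by_g :: "((nat \<Rightarrow> 'a) \<Rightarrow> (nat \<Rightarrow> 'b) \<Rightarrow> (nat \<Rightarrow> 'c) \<Rightarrow> 'x) \<Rightarrow> bool" where
  "determined_by_g h \<longleftrightarrow> (\<exists>FS. finite FS \<and> FS \<subseteq> lin_forms \<and>
      (\<forall>eA e1 e2 eC. (\<forall>F\<in>FS. g (F e1) = g (F e2)) \<longrightarrow> h eA e1 eC = h eA e2 eC))"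

lemma determined_by_gI:
  "finite FS \<Longrightarrow> FS \<subseteq> lin_forms \<Longrightarrow>
    (\<And>eA e1 e2 eC. \<forall>F\<in>FS. g (F e1) = g (F e2) \<Longrightarrow> h eA e1 eC = h eA e2 eC) \<Longrightarrow>
    determined_by_g h"
  unfolding determined_by_g_def by blast

lemma determined_by_gE:
  assumes "determined_by_g h"
  obtains FS where "finite FS" "FS \<subseteq> lin_forms"
    "\<And>eA e1 e2 eC. \<forall>F\<in>FS. g (F e1) = g (F e2) \<Longrightarrow> h eA e1 eC = h eA e2 eC"
  using assms unfolding determined_by_g_def by blast

lemma determined_by_g_const: "(\<And>eA e1 e2 eC. h eA e1 eC = h eA e2 eC) \<Longrightarrow> determined_by_g h"
  by (rule determined_by_gI[of "{}"]) auto

lemma determined_by_g_comp2: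
  assumes "determined_by_g h" "determined_by_g h'"
  shows "determined_by_g (\<lambda>eA eB eC. \<phi> (h eA eB eC) (h' eA eB eC))"
proof -
  obtain FS where "finite FS" "FS \<subseteq> lin_forms"
    and h: "\<And>eA e1 e2 eC. \<forall>F\<in>FS. g (F e1) = g (F e2) \<Longrightarrow> h eA e1 eC = h eA e2 eC"
    using determined_by_gE[OF assms(1)] by blast
  moreover obtain FS' where "finite FS'" "FS' \<subseteq> lin_forms"
    and h': "\<And>eA e1 e2 eC. \<forall>F\<in>FS'. g (F e1) = g (F e2) \<Longrightarrow> h' eA e1 eC = h' eA e2 eC"
    using determined_by_gE[OF assms(2)] by blast
  ultimately show ?thesis
  proof (intro determined_by_gI[of "FS \<union> FS'"])
    fix eA e1 e2 eC
    assume "\<forall>F\<in>FS \<union> FS'. g (F e1) = g (F e2)"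
    then have "h eA e1 eC = h eA e2 eC" "h' eA e1 eC = h' eA e2 eC"
      using h h' by blast+
    then show "\<phi> (h eA e1 eC) (h' eA e1 eC) = \<phi> (h eA e2 eC) (h' eA e2 eC)"
      by simp
  qed simp_all
qed

lemma determined_by_g_comp:
  "determined_by_g h \<Longrightarrow> determined_by_g (\<lambda>eA eB eC. \<phi> (h eA eB eC))"
  using determined_by_g_comp2[of h h "\<lambda>x _. \<phi> x"] by simp

lemma determined_by_g_map:
  "(\<And>t. t \<in> set ts \<Longrightarrow> determined_by_g (h t)) \<Longrightarrow>
    determined_by_g (\<lambda>eA eB eC. map (\<lambda>t. h t eA eB eC) ts)"
proof (induct ts)
  case Nil
  show ?case
    by (rule determined_by_g_const) simp
next
  case (Cons t ts)
  then show ?case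
    using determined_by_g_comp2[of "h t" _ Cons] by simp
qed

lemma evalC_determined_by_g: "determined_by_g (\<lambda>eA eB eC. evalC \<iota> g FA FC eA eB eC t)"
proof (induct t)
  case (FunC f ts)
  then show ?case
    using determined_by_g_comp[OF determined_by_g_map[of ts], where \<phi> = "FC f"] by simp
next
  case (Gmap s)
  obtain F H where "F \<in> lin_forms" "\<And>eA eB. evalB \<iota> FA eA eB s = F eB + \<iota> (H eA)"
    using evalB_decomp by blast
  then show ?case
    unfolding determined_by_g_def by (intro exI[of _ "{F}"]) (simp add: g.add)
next
  case (AddC s t)
  then show ?case
    using determined_by_g_comp2[of _ _ "(+)"] by simp
next
  case (NegC s)
  then show ?case
    using determined_by_g_comp[of _ uminus] by simp
qed (auto intro: determined_by_g_const)

lemma form_invariant_if_determined_by_g: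
  assumes "determined_by_g P"
  shows "form_invariant P"
proof -
  obtain FS where "finite FS" "FS \<subseteq> lin_forms"
    and P: "\<And>eA e1 e2 eC. \<forall>F\<in>FS. g (F e1) = g (F e2) \<Longrightarrow> P eA e1 eC = P eA e2 eC"
    using determined_by_gE[OF assms] by blast
  then show ?thesis
  proof (intro form_invariantI[of FS 1])
    fix eA e1 e2 eC
    assume "forms_equiv FS 1 e1 e2" "P eA e1 eC"
    then show "P eA e2 eC"
      using P forms_equivD(1) by blast
  qed simp_all
qed

end

lemma finite_image_factor:
  assumes "finite (h ` A)" and "\<And>x y. x \<in> A \<Longrightarrow> y \<in> A \<Longrightarrow> h x = h y \<Longrightarrow> f x = f y"
  shows "finite (f ` A)"
proof -
  have "f (inv_into A h (h x)) = f x" if "x \<in> A" for x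
    using that by (intro assms(2) inv_into_into f_inv_into_f) auto
  then have "f ` A = (\<lambda>q. f (inv_into A h q)) ` h ` A"
    by (force simp: image_image)
  then show ?thesis
    using assms(1) by simp
qed

lemma almost_saturated_if_exceptions_finite:
  assumes "finite E"
    and "\<And>c. c \<in> E \<Longrightarrow> finite (f ` {x. h x = c})"
    and "\<And>x y. x \<in> Z \<Longrightarrow> y \<notin> Z \<Longrightarrow> f x = f y \<Longrightarrow> h x \<in> E"
  shows "almost_saturated f UNIV Z"
proof -
  have "f ` Z \<inter> f ` (UNIV - Z) \<subseteq> (\<Union>c\<in>E. f ` {x. h x = c})"
    using assms(3) by blast
  moreover have "finite (\<Union>c\<in>E. f ` {x. h x = c})"
    using assms(1,2) by blast
  ultimately show ?thesis
    unfolding almost_saturated_def by (rule finite_subset)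
qed

section \<open>Torsion-free quotient: shifting witnesses and exceptional values\<close>

locale exact_seq_torsion_free = exact_seq +
  assumes torsion_free: "\<And>n c. 0 < n \<Longrightarrow> nmul n (c::'c) = 0 \<Longrightarrow> c = 0"
begin

lemma zmul_eq_0_iff: "zmul k (c::'c) = 0 \<longleftrightarrow> k = 0 \<or> c = 0"
proof (cases "0 \<le> k")
  case True
  then show ?thesis
    using torsion_free[of "nat k" c] by (cases "k = 0") (auto simp: zmul_nonneg)
next
  case False
  then show ?thesis
    using torsion_free[of "nat (- k)" c] zmul_minus_left[of k c] by (auto simp: zmul_nonneg)
qed

lemma zmul_cancel: "zmul k (c::'c) = zmul k c' \<longleftrightarrow> k = 0 \<or> c = c'"
  by (metis zmul_diff_right zmul_eq_0_iff eq_iff_diff_eq_0)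

lemma finite_zmul_preimage:
  assumes "k \<noteq> 0"
  shows "finite {c::'c. zmul k c = d}"
proof (cases "\<exists>c. zmul k c = d")
  case True
  then obtain c0 where "zmul k c0 = d"
    by blast
  then have "{c. zmul k c = d} \<subseteq> {c0}"
    using assms by (auto simp: zmul_cancel)
  then show ?thesis
    by (rule finite_subset) simp
qed simp

lemma common_shift:
  assumes J: "finite J" "J \<subseteq> lin_forms" "J \<noteq> {}" "\<forall>F\<in>J. coeff i F \<noteq> 0"
    and s: "(\<Sum>F\<in>J. s F * coeff i F) = Gcd (coeff i ` J)"
    and M: "Gcd (coeff i ` J) dvd int M"
    and equiv: "forms_equiv (insert (bezout_form i s J) (defect_form i s J ` J)) (N * M) e1 e2"
    and vanish: "\<forall>F\<in>J. g (F (e1(i := x))) = 0"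
  obtains w where "g w = 0" "\<exists>v. w = nmul N v"
    "\<forall>F\<in>J. drop_var i F e1 - drop_var i F e2 = zmul (coeff i F) w"
proof -
  define G where "G = Gcd (coeff i ` J)"
  define \<rho> where "\<rho> = bezout_form i s J"
  have "G \<noteq> 0"
    using J(3,4) by (auto simp: G_def)
  then have "0 < G"
    using Gcd_int_greater_eq_0[of "coeff i ` J"] unfolding G_def by linarith
  obtain z where z: "\<rho> e1 - \<rho> e2 = nmul (N * M) z"
    using forms_equivD(2)[OF equiv] unfolding \<rho>_def by blast
  obtain q where q: "M = nat G * q"
    using M \<open>0 < G\<close> unfolding G_def by (metis int_dvd_int_iff less_imp_le nat_0_le dvdE)
  define w where "w = nmul N (nmul q z)"
  have Gw: "zmul G w = \<rho> e1 - \<rho> e2"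
    using \<open>0 < G\<close> by (simp add: w_def z q zmul_nonneg flip: nmul_mult) (simp add: ac_simps)
  have "zmul G (g w) = g (\<rho> e1) - g (\<rho> e2)"
    by (simp add: Gw g.diff flip: g.zmul)
  also have "\<dots> = 0"
    using forms_equivD(1)[OF equiv, of "bezout_form i s J"] by (simp add: \<rho>_def)
  finally have "g w = 0"
    using \<open>0 < G\<close> by (simp add: zmul_eq_0_iff)
  have g_drop: "g (drop_var i F e1) = - zmul (coeff i F) (g x)" if "F \<in> J" for F
    using that J(2) vanish by (blast intro: g_drop_var_if_vanish)
  have g_\<rho>: "g (\<rho> e1) = - zmul G (g x)"
    using J(2) vanish unfolding \<rho>_def G_def s[symmetric] by (rule g_bezout_form)
  have "drop_var i F e1 - drop_var i F e2 = zmul (coeff i F) w" if "F \<in> J" for F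
  proof -
    have "G dvd coeff i F"
      using that by (simp add: G_def)
    then have dvd: "coeff i F div G * G = coeff i F"
      by (rule dvd_div_mult_self)
    have "g (defect_form i s J F e1) = zmul (coeff i F div G) (g (\<rho> e1)) - g (drop_var i F e1)"
      by (simp add: defect_form_def \<rho>_def G_def g.diff g.zmul)
    also have "\<dots> = 0"
      using g_drop[OF that] by (simp add: g_\<rho> zmul_minus_right dvd flip: zmul_mult)
    finally have "g (defect_form i s J F e1) = 0" .
    then have "defect_form i s J F e1 = defect_form i s J F e2"
      using forms_equivD(3)[OF equiv] that by blast
    then have "drop_var i F e1 - drop_var i F e2 = zmul (coeff i F div G) (\<rho> e1 - \<rho> e2)"
      by (simp add: defect_form_def \<rho>_def G_def zmul_diff_right algebra_simps)
    also have "\<dots> = zmul (coeff i F) w"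
      by (simp add: Gw[symmetric] dvd flip: zmul_mult)
    finally show ?thesis .
  qed
  with \<open>g w = 0\<close> show thesis
    by (intro that) (auto simp: w_def)
qed

lemma forms_equiv_update:
  assumes FS: "FS \<subseteq> lin_forms"
    and equiv: "forms_equiv (drop_var i ` FS) N e1 e2"
    and w: "g w = 0" "\<exists>v. w = nmul N v"
    and shift: "\<And>F. F \<in> FS \<Longrightarrow> coeff i F \<noteq> 0 \<Longrightarrow> g (F (e1(i := x))) = 0 \<Longrightarrow>
      drop_var i F e1 - drop_var i F e2 = zmul (coeff i F) w"
  shows "forms_equiv FS N (e1(i := x)) (e2(i := x + w))"
proof (rule forms_equivI)
  fix F
  assume F: "F \<in> FS"
  then have F_update: "F (e(i := y)) = zmul (coeff i F) y + drop_var i F e" for e y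
    using FS lin_forms_update by blast
  have drop: "drop_var i F \<in> drop_var i ` FS"
    using F by blast
  have diff: "F (e1(i := x)) - F (e2(i := x + w))
      = (drop_var i F e1 - drop_var i F e2) - zmul (coeff i F) w"
    by (simp add: F_update zmul_add_right)
  show "g (F (e1(i := x)) - F (e2(i := x + w))) = 0"
    using forms_equivD(1)[OF equiv drop] w(1) by (simp add: diff g.diff g.zmul)
  obtain y where "drop_var i F e1 - drop_var i F e2 = nmul N y"
    using forms_equivD(2)[OF equiv drop] by blast
  with w(2) show "\<exists>y. F (e1(i := x)) - F (e2(i := x + w)) = nmul N y"
    by (auto simp: diff zmul_nmul_commute simp flip: nmul_diff_right)
  assume g_zero: "g (F (e1(i := x))) = 0"
  have "drop_var i F e1 - drop_var i F e2 = zmul (coeff i F) w"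
  proof (cases "coeff i F = 0")
    case True
    then show ?thesis
      using g_zero forms_equivD(3)[OF equiv drop] by (simp add: F_update)
  qed (use F g_zero shift in blast)
  then show "F (e1(i := x)) = F (e2(i := x + w))"
    using diff by simp
qed

lemma forms_equiv_extend:
  assumes FS: "finite FS" "FS \<subseteq> lin_forms" and "0 < N"
  obtains FS' M where "finite FS'" "FS' \<subseteq> lin_forms" "0 < M"
    "\<And>e1 e2 x. forms_equiv FS' M e1 e2 \<Longrightarrow> \<exists>y. forms_equiv FS N (e1(i := x)) (e2(i := y))"
proof -
  define FS0 where "FS0 = {F \<in> FS. coeff i F \<noteq> 0}"
  have FS0: "finite FS0" "FS0 \<subseteq> lin_forms"
    using FS unfolding FS0_def by auto
  have "\<forall>J. \<exists>s. J \<subseteq> FS0 \<longrightarrow> (\<Sum>F\<in>J. s F * coeff i F) = Gcd (coeff i ` J)"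
    using Gcd_int_lincomb FS0(1) finite_subset by metis
  then obtain s where s: "\<And>J. J \<subseteq> FS0 \<Longrightarrow> (\<Sum>F\<in>J. s J F * coeff i F) = Gcd (coeff i ` J)"
    by metis
  define P where "P = (\<Prod>F\<in>FS0. nat \<bar>coeff i F\<bar>)"
  define FS' where "FS' = drop_var i ` FS
    \<union> (\<Union>J\<in>Pow FS0. insert (bezout_form i (s J) J) (defect_form i (s J) J ` J))"
  have "0 < P"
    unfolding P_def using FS0(1) by (auto simp: FS0_def intro: prod_pos)
  have "finite FS'"
    unfolding FS'_def using FS(1) FS0(1) by (auto intro: finite_subset)
  moreover have "FS' \<subseteq> lin_forms"
    unfolding FS'_def using FS FS0
    by (auto intro!: lin_forms_drop_var lin_forms_bezout_form lin_forms_defect_form intro: finite_subset)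
  moreover have "\<exists>y. forms_equiv FS N (e1(i := x)) (e2(i := y))"
    if equiv: "forms_equiv FS' (N * P) e1 e2" for e1 e2 x
  proof -
    define J where "J = {F \<in> FS0. g (F (e1(i := x))) = 0}"
    have J: "J \<subseteq> FS0" "finite J"
      using FS0(1) unfolding J_def by auto
    obtain w where w: "g w = 0" "\<exists>v. w = nmul N v"
      "\<forall>F\<in>J. drop_var i F e1 - drop_var i F e2 = zmul (coeff i F) w"
    proof (cases "J = {}")
      case True
      then show ?thesis
        by (intro that[of 0]) (auto simp: g.zero intro!: exI[of _ 0])
    next
      case False
      have dvd: "Gcd (coeff i ` J) dvd int P"
        unfolding P_def by (rule Gcd_dvd_prod_nat_abs[OF FS0(1) J(1) False])
      have equiv_J: "forms_equiv (insert (bezout_form i (s J) J) (defect_form i (s J) J ` J)) (N * P) e1 e2"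
        by (rule forms_equiv_mono[OF equiv]) (use J(1) in \<open>auto simp: FS'_def\<close>)
      have "J \<subseteq> lin_forms" "\<forall>F\<in>J. coeff i F \<noteq> 0" "\<forall>F\<in>J. g (F (e1(i := x))) = 0"
        using FS0(2) unfolding J_def FS0_def by auto
      then show ?thesis
        using common_shift[OF J(2) _ False _ s[OF J(1)] dvd equiv_J] that by blast
    qed
    have "forms_equiv FS N (e1(i := x)) (e2(i := x + w))"
    proof (rule forms_equiv_update[OF FS(2) _ w(1,2)])
      show "forms_equiv (drop_var i ` FS) N e1 e2"
        by (rule forms_equiv_mono[OF equiv]) (auto simp: FS'_def)
    qed (use w(3) in \<open>auto simp: J_def FS0_def\<close>)
    then show ?thesis
      by blast
  qed
  ultimately show thesis
    using \<open>0 < N\<close> \<open>0 < P\<close> by (intro that[of FS' "N * P"]) auto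
qed

lemma form_invariant_ex_B:
  assumes "form_invariant P"
  shows "form_invariant (\<lambda>eA eB eC. \<exists>x. P eA (eB(i := x)) eC)"
proof -
  obtain FS N where FS: "finite FS" "FS \<subseteq> lin_forms" "0 < N"
    and P: "\<And>eA e1 e2 eC. forms_equiv FS N e1 e2 \<Longrightarrow> P eA e1 eC \<Longrightarrow> P eA e2 eC"
    using form_invariantE[OF assms] by blast
  obtain FS' M where "finite FS'" "FS' \<subseteq> lin_forms" "0 < M"
    and extend: "\<And>e1 e2 x. forms_equiv FS' M e1 e2 \<Longrightarrow> \<exists>y. forms_equiv FS N (e1(i := x)) (e2(i := y))"
    using forms_equiv_extend[OF FS] by blast
  then show ?thesis
    by (intro form_invariantI[of FS' M]) (use P in blast)+
qed

lemma sat_form_invariant: "form_invariant (\<lambda>eA eB eC. sat \<iota> g RA FA RC FC eA eB eC \<phi>)"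
proof (induct \<phi>)
  case (EqB s t)
  show ?case
    unfolding sat.simps by (rule form_invariant_eq_B)
next
  case (EqC s t)
  have "determined_by_g (\<lambda>eA eB eC. evalC \<iota> g FA FC eA eB eC s = evalC \<iota> g FA FC eA eB eC t)"
    by (rule determined_by_g_comp2[OF evalC_determined_by_g evalC_determined_by_g])
  then show ?case
    unfolding sat.simps by (rule form_invariant_if_determined_by_g)
next
  case (RelC r ts)
  have "determined_by_g (\<lambda>eA eB eC. RC r (map (\<lambda>t. evalC \<iota> g FA FC eA eB eC t) ts))"
    by (rule determined_by_g_comp[OF determined_by_g_map[OF evalC_determined_by_g]])
  then show ?case
    unfolding sat.simps by (rule form_invariant_if_determined_by_g)
next
  case (DivB n t)
  show ?case
    unfolding sat.simps by (rule form_invariant_div_B)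
next
  case (Neg \<phi>)
  then show ?case
    unfolding sat.simps by (rule form_invariant_not)
next
  case (Conj \<phi> \<psi>)
  then show ?case
    unfolding sat.simps by (rule form_invariant_conj)
next
  case (ExA i \<phi>)
  then show ?case
    unfolding sat.simps by (rule form_invariant_ex_A)
next
  case (ExB i \<phi>)
  then show ?case
    unfolding sat.simps by (rule form_invariant_ex_B)
next
  case (ExC i \<phi>)
  then show ?case
    unfolding sat.simps by (rule form_invariant_ex_C)
qed (auto intro: form_invariant_const)

lemma definable_B_exceptions:
  fixes RA :: "'ra \<Rightarrow> 'a list \<Rightarrow> bool" and FA :: "'fa \<Rightarrow> 'a list \<Rightarrow> 'a"
    and RC :: "'rc \<Rightarrow> 'c list \<Rightarrow> bool" and FC :: "'fc \<Rightarrow> 'c list \<Rightarrow> 'c"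
  assumes "definable_B \<iota> g RA FA RC FC X"
  obtains N E where "0 < N" "finite E"
    "\<And>b1 b2. b1 \<in> X \<Longrightarrow> b2 \<notin> X \<Longrightarrow> quot_nA \<iota> N b1 = quot_nA \<iota> N b2 \<Longrightarrow> g b1 \<in> E"
proof -
  obtain \<phi> :: "('ra, 'fa, 'rc, 'fc) fml" and eA eB eC
    where X: "X = {b. sat \<iota> g RA FA RC FC eA (eB(0 := b)) eC \<phi>}"
    using assms unfolding definable_B_def by blast
  obtain FS N where FS: "finite FS" "FS \<subseteq> lin_forms" "0 < N"
    and inv: "\<And>eA e1 e2 eC. forms_equiv FS N e1 e2 \<Longrightarrow>
      sat \<iota> g RA FA RC FC eA e1 eC \<phi> \<Longrightarrow> sat \<iota> g RA FA RC FC eA e2 eC \<phi>"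
    using form_invariantE[OF sat_form_invariant[of RA FA RC FC \<phi>]] by blast
  define E where "E = (\<Union>F\<in>FS. {c. coeff 0 F \<noteq> 0 \<and> zmul (coeff 0 F) c = - g (drop_var 0 F eB)})"
  have "finite E"
    unfolding E_def
  proof (intro finite_UN_I[OF FS(1)])
    show "finite {c. coeff 0 F \<noteq> 0 \<and> zmul (coeff 0 F) c = - g (drop_var 0 F eB)}" for F
      by (cases "coeff 0 F = 0") (simp_all add: finite_zmul_preimage)
  qed
  moreover have "g b1 \<in> E"
    if b1: "b1 \<in> X" and b2: "b2 \<notin> X" and same: "quot_nA \<iota> N b1 = quot_nA \<iota> N b2" for b1 b2
  proof (rule ccontr)
    assume "g b1 \<notin> E"
    obtain a where a: "b2 = b1 + nmul N (\<iota> a)"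
      using quot_nA_eqD[OF same] by blast
    have equiv: "forms_equiv FS N (eB(0 := b1)) (eB(0 := b1 + nmul N (\<iota> a)))"
    proof (rule forms_equiv_update[OF FS(2) forms_equiv_refl])
      fix F
      assume F: "F \<in> FS" "coeff 0 F \<noteq> 0" "g (F (eB(0 := b1))) = 0"
      then have "zmul (coeff 0 F) (g b1) + g (drop_var 0 F eB) = 0"
        using FS(2) by (auto simp: lin_forms_update g.add g.zmul)
      then have "zmul (coeff 0 F) (g b1) = - g (drop_var 0 F eB)"
        by (simp add: eq_neg_iff_add_eq_0)
      with F(1,2) have "g b1 \<in> E"
        unfolding E_def by blast
      with \<open>g b1 \<notin> E\<close> show "drop_var 0 F eB - drop_var 0 F eB = zmul (coeff 0 F) (nmul N (\<iota> a))"
        by blast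
    qed (auto simp: g.nmul)
    have "b2 \<in> X"
      using inv[OF equiv] b1 unfolding X a by simp
    with b2 show False
      by contradiction
  qed
  ultimately show thesis
    using FS(3) that by blast
qed

lemma finite_quot_nA_fiber:
  assumes "0 < N" "finite (range (quot_nB N :: 'b \<Rightarrow> 'b set))"
  shows "finite (quot_nA \<iota> N ` {b. g b = c})"
proof (rule finite_image_factor)
  show "finite (quot_nB N ` {b. g b = c})"
    using assms(2) by (rule finite_subset[rotated]) auto
  fix b b'
  assume "b \<in> {b. g b = c}" "b' \<in> {b. g b = c}" "quot_nB N b = quot_nB N b'"
  then have "g b' = g b" "b' \<in> quot_nB N b"
    unfolding quot_nB_def by (auto intro: exI[of _ 0])
  then obtain y where y: "b' = b + nmul N y" "g b' = g b"
    unfolding quot_nB_def by blast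
  then have "nmul N (g y) = 0"
    by (simp add: g.add g.nmul)
  then obtain a where "y = \<iota> a"
    using torsion_free[OF assms(1)] in_range_iota by blast
  then show "quot_nA \<iota> N b = quot_nA \<iota> N b'"
    using y(1) by (simp add: quot_nA_add)
qed

end

theorem lemma2p36:
  fixes \<iota> :: "'a::ab_group_add \<Rightarrow> 'b::ab_group_add"
    and g :: "'b \<Rightarrow> 'c::ab_group_add"
    and RA :: "'ra \<Rightarrow> 'a list \<Rightarrow> bool" and FA :: "'fa \<Rightarrow> 'a list \<Rightarrow> 'a"
    and RC :: "'rc \<Rightarrow> 'c list \<Rightarrow> bool" and FC :: "'fc \<Rightarrow> 'c list \<Rightarrow> 'c"
    and X :: "'b set"
  assumes iota_hom: "\<And>x y. \<iota> (x + y) = \<iota> x + \<iota> y"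
    and iota_inj: "inj \<iota>"
    and g_hom: "\<And>x y. g (x + y) = g x + g y"
    and g_surj: "surj g"
    and exact: "{b. g b = 0} = range \<iota>"
    and C_torsion_free: "\<And>n c. n > 0 \<Longrightarrow> nmul n (c::'c) = 0 \<Longrightarrow> c = 0"
    and B_mod_nB_finite: "\<And>n. n > 0 \<Longrightarrow> finite (range (quot_nB n :: 'b \<Rightarrow> 'b set))"
    and X_definable: "definable_B \<iota> g RA FA RC FC X"
  shows "\<exists>n>0. almost_saturated (quot_nA \<iota> n) UNIV X"
proof -
  interpret exact_seq_torsion_free \<iota> g
    by unfold_locales (use iota_hom g_hom exact C_torsion_free in auto)
  obtain N E where "0 < N" "finite E"
    and exceptions: "\<And>b1 b2. b1 \<in> X \<Longrightarrow> b2 \<notin> X \<Longrightarrow> quot_nA \<iota> N b1 = quot_nA \<iota> N b2 \<Longrightarrow> g b1 \<in> E"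
    using definable_B_exceptions[OF X_definable] by blast
  have "almost_saturated (quot_nA \<iota> N) UNIV X"
    using \<open>finite E\<close> finite_quot_nA_fiber[OF \<open>0 < N\<close> B_mod_nB_finite[OF \<open>0 < N\<close>]] exceptions
    by (rule almost_saturated_if_exceptions_finite)
  with \<open>0 < N\<close> show ?thesis
    by blast
qed

end
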